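(* Let $\mathbb F$ be a field, let $A\subset\mathbb F$ be a finite set, let $n\le |A|$, and let $a_1,\dots,a_n\in\mathbb F\setminus\{0\}$ (not necessarily distinct). Let $n_1,\dots,n_t$ be the multiplicities of the distinct values occurring among $a_1,\dots,a_n$ (so $\sum_{i=1}^t n_i=n$), and put $$d:=n\big(|A|-n\big)+\sum_{1\le i<j\le t}n_in_j .$$ If $\mathbb F$ has characteristic $0$ or characteristic $p>d$, then $$\Big|\Big\{\sum_{i=1}^n a_ix_i \;:\; x_1,\dots,x_n\in A,\ x_i\ne x_j \text{ for } i\ne j\Big\}\Big|\ \ge\ d+1 .$$ *)

theory Defs
  imports Main
begin

definition mult_of :: "(nat \<Rightarrow> 'a) \<Rightarrow> nat \<Rightarrow> 'a \<Rightarrow> nat" where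
  "mult_of a n v = card {i \<in> {1..n}. a i = v}"

text \<open>Sum over i < j of n_i n_j, i.e. over unordered pairs of distinct values occurring among a 1..a n.\<close>
definition pair_mult_sum :: "(nat \<Rightarrow> 'a) \<Rightarrow> nat \<Rightarrow> nat" where
  "pair_mult_sum a n =
     (\<Sum>S\<in>{S. S \<subseteq> a ` {1..n} \<and> card S = 2}. \<Prod>v\<in>S. mult_of a n v)"

definition dval :: "'a set \<Rightarrow> (nat \<Rightarrow> 'a) \<Rightarrow> nat \<Rightarrow> nat" where
  "dval A a n = n * (card A - n) + pair_mult_sum a n"

definition restricted_sums :: "'a::field set \<Rightarrow> (nat \<Rightarrow> 'a) \<Rightarrow> nat \<Rightarrow> 'a set" where
  "restricted_sums A a n =
     {(\<Sum>i=1..n. a i * x i) | x. (\<forall>i\<in>{1..n}. x i \<in> A) \<and> inj_on x {1..n}}"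

end

theory Submission
  imports Defs "Jordan_Normal_Form.Determinant" "HOL-Library.FuncSet"
begin

(* The polynomial method, run through a coefficient functional. With the Lagrange weights
   w y = 1 / (\<Prod>b\<in>A-{y}. y - b), the functional L f = \<Sum>x\<in>A^n. f x * (\<Prod>i. w (x i))
   returns the coefficient of \<Prod>i. x i ^ (|A| - 1) of any polynomial of total degree at most
   n (|A| - 1). If the restricted sumset had at most d elements, a polynomial P of degree d would
   vanish on it, and then L kills F x = (\<Prod>i. x i ^ e i) * V x * P (\<Sum>i. a i * x i), where V is the
   Vandermonde determinant and e i counts the earlier indices j < i with a j = a i: V vanishes on
   tuples with a repeated entry and P on all others. But the degrees balance exactly, so L F is
   d! times the determinant of a matrix of divided powers a i ^ m / m!, and a kernel vector of that
   matrix would yield a polynomial of degree below |A| with |A| roots counted with multiplicity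
   (at 0 and at the values a i). The bound on the characteristic keeps all factorials up to d
   invertible. *)

section \<open>Lagrange weights and the coefficient functional\<close>

definition lagrange_weight :: "'a::field set \<Rightarrow> 'a \<Rightarrow> 'a" where
  "lagrange_weight A y = inverse (\<Prod>b\<in>A-{y}. y - b)"

lemma degree_prod_monic_linear: "degree (\<Prod>b\<in>B. [:-b, 1:]) = card (B :: 'a::field set)"
  by (subst degree_prod_eq_sum_degree) auto

lemma lead_coeff_prod_monic_linear: "lead_coeff (\<Prod>b\<in>B. [:-b, 1:]) = (1 :: 'a::field)"
  by (simp add: lead_coeff_prod)

text \<open>The sum is the coefficient of \<open>X^(|A| - 1)\<close> in the Lagrange interpolant of \<open>y^e\<close> on \<open>A\<close>,
  which is \<open>X^e\<close> itself.\<close>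
lemma sum_power_lagrange_weight:
  fixes A :: "'a::field set"
  assumes fin: "finite A" and e: "e < card A"
  shows "(\<Sum>y\<in>A. y ^ e * lagrange_weight A y) = (if e = card A - 1 then 1 else 0)"
proof -
  define L where "L y = (\<Prod>b\<in>A-{y}. [:-b, 1:])" for y
  define p where "p = (\<Sum>y\<in>A. smult (y ^ e * lagrange_weight A y) (L y)) - monom 1 e"
  have deg_L: "degree (L y) = card A - 1" and lc_L: "coeff (L y) (card A - 1) = 1" if "y \<in> A" for y
    using that fin lead_coeff_prod_monic_linear[of "A - {y}"]
    by (simp_all add: L_def degree_prod_monic_linear card_Diff_singleton)
  have deg_p: "degree p \<le> card A - 1"
    unfolding p_def using e deg_L
    by (intro degree_diff_le degree_sum_le fin order_trans[OF degree_smult_le])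
       (auto simp: degree_monom_eq)
  have root: "poly p z = 0" if z: "z \<in> A" for z
  proof -
    have "poly (L y) z = 0" if "y \<in> A - {z}" for y
      using that z fin unfolding L_def by (auto simp: poly_prod intro!: prod_zero bexI[of _ z])
    then have "poly p z = z ^ e * lagrange_weight A z * poly (L z) z - z ^ e"
      unfolding p_def using fin z by (simp add: poly_sum poly_monom sum.remove[OF fin z])
    moreover have "poly (L z) z = (\<Prod>b\<in>A-{z}. z - b)" and "(\<Prod>b\<in>A-{z}. z - b) \<noteq> 0"
      using fin by (simp_all add: L_def poly_prod)
    ultimately show ?thesis by (simp add: lagrange_weight_def)
  qed
  have "p = 0"
  proof (rule ccontr)
    assume "p \<noteq> 0"
    then have "card A \<le> card {z. poly p z = 0}"
      using root by (intro card_mono poly_roots_finite) auto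
    also have "\<dots> \<le> degree p" by (rule card_poly_roots_bound) fact
    finally show False using deg_p e by linarith
  qed
  moreover have "coeff p (card A - 1) = (\<Sum>y\<in>A. y ^ e * lagrange_weight A y) - (if e = card A - 1 then 1 else 0)"
    unfolding p_def using lc_L by (simp add: coeff_sum)
  ultimately show ?thesis by simp
qed

definition lagrange_functional :: "'a::field set \<Rightarrow> nat \<Rightarrow> ((nat \<Rightarrow> 'a) \<Rightarrow> 'a) \<Rightarrow> 'a" where
  "lagrange_functional A n f = (\<Sum>x \<in> {..<n} \<rightarrow>\<^sub>E A. f x * (\<Prod>i<n. lagrange_weight A (x i)))"

lemma lagrange_functional_prod:
  "finite A \<Longrightarrow> lagrange_functional A n (\<lambda>x. \<Prod>i<n. g i (x i)) =
     (\<Prod>i<n. \<Sum>y\<in>A. g i y * lagrange_weight A y)"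
  unfolding lagrange_functional_def by (simp add: prod_sum_PiE prod.distrib)

lemma lagrange_functional_sum:
  "lagrange_functional A n (\<lambda>x. \<Sum>s\<in>S. f s x) = (\<Sum>s\<in>S. lagrange_functional A n (f s))"
  unfolding lagrange_functional_def sum_distrib_right by (rule sum.swap)

lemma lagrange_functional_cmult:
  "lagrange_functional A n (\<lambda>x. c * f x) = c * lagrange_functional A n f"
  unfolding lagrange_functional_def by (simp add: sum_distrib_left mult.assoc)

lemma ex_less_if_sum_le_mult:
  fixes t :: "nat \<Rightarrow> nat"
  assumes "(\<Sum>i<n. t i) \<le> n * K" and "\<exists>i<n. t i \<noteq> K"
  shows "\<exists>i<n. t i < K"
proof (rule ccontr)
  assume "\<not> ?thesis"
  then have ge: "\<forall>i<n. K \<le> t i" by auto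
  from assms(2) obtain j where "j < n" "t j \<noteq> K" by auto
  with ge have "(\<Sum>i<n. K) < (\<Sum>i<n. t i)"
    by (intro sum_strict_mono_ex1) force+
  with assms(1) show False by simp
qed

text \<open>The combinatorial Nullstellensatz in coefficient form.\<close>
lemma lagrange_functional_monomial:
  fixes A :: "'a::field set"
  assumes fin: "finite A" and ne: "A \<noteq> {}" and deg: "(\<Sum>i<n. t i) \<le> n * (card A - 1)"
  shows "lagrange_functional A n (\<lambda>x. \<Prod>i<n. x i ^ t i) = (if \<forall>i<n. t i = card A - 1 then 1 else 0)"
proof -
  have L: "lagrange_functional A n (\<lambda>x. \<Prod>i<n. x i ^ t i) = (\<Prod>i<n. \<Sum>y\<in>A. y ^ t i * lagrange_weight A y)"
    by (rule lagrange_functional_prod[OF fin])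
  show ?thesis
  proof (cases "\<forall>i<n. t i = card A - 1")
    case True
    show ?thesis
      unfolding L using True fin ne by (simp add: sum_power_lagrange_weight card_gt_0_iff)
  next
    case False
    then obtain i where "i < n" "t i < card A - 1"
      using ex_less_if_sum_le_mult[OF deg] by auto
    with fin False show ?thesis
      by (auto simp: L sum_power_lagrange_weight intro!: prod_zero bexI[of _ i])
  qed
qed

section \<open>Moments of a linear form\<close>

definition linear_form :: "(nat \<Rightarrow> 'a::comm_semiring_0) \<Rightarrow> nat \<Rightarrow> (nat \<Rightarrow> 'a) \<Rightarrow> 'a" where
  "linear_form b n x = (\<Sum>i<n. b i * x i)"

definition linear_form_moment ::
    "'a::field set \<Rightarrow> (nat \<Rightarrow> 'a) \<Rightarrow> nat \<Rightarrow> nat \<Rightarrow> (nat \<Rightarrow> nat) \<Rightarrow> 'a" where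
  "linear_form_moment A b n k t =
     lagrange_functional A n (\<lambda>x. (\<Prod>i<n. x i ^ t i) * linear_form b n x ^ k)"

definition divided_power :: "'a::field \<Rightarrow> nat \<Rightarrow> 'a" where
  "divided_power c m = c ^ m / of_nat (fact m)"

lemma of_nat_fact_neq_0_mono:
  assumes "of_nat (fact K) \<noteq> (0::'a::semiring_1)" and "m \<le> K"
  shows "of_nat (fact m) \<noteq> (0::'a)"
proof
  assume "of_nat (fact m) = (0::'a)"
  moreover obtain q where "fact K = fact m * (q::nat)"
    using fact_dvd[OF assms(2)] by (auto elim: dvdE)
  ultimately show False using assms(1) by simp
qed

lemma of_nat_fact_Suc: "of_nat (fact (Suc m)) = (of_nat (Suc m) :: 'a::semiring_1) * of_nat (fact m)"
  by (simp only: fact_Suc of_nat_mult of_nat_id)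

lemma of_nat_fact_Suc_neq_0D:
  assumes "of_nat (fact (Suc m)) \<noteq> (0::'a::semiring_1)"
  shows "of_nat (Suc m) \<noteq> (0::'a)" and "of_nat (fact m) \<noteq> (0::'a)"
  using assms unfolding of_nat_fact_Suc by auto

lemma divided_power_Suc:
  assumes "of_nat (fact (Suc m)) \<noteq> (0::'a::field)"
  shows "c * divided_power c m = of_nat (Suc m) * divided_power (c::'a) (Suc m)"
  using of_nat_fact_Suc_neq_0D[OF assms]
  unfolding divided_power_def of_nat_fact_Suc power_Suc
  by (simp add: field_simps del: of_nat_Suc)

lemma sum_fun_upd_Suc:
  fixes t :: "nat \<Rightarrow> nat"
  assumes "j < n"
  shows "(\<Sum>i<n. (t(j := Suc (t j))) i) = Suc (\<Sum>i<n. t i)"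
proof -
  have "(\<Sum>i<n. (t(j := Suc (t j))) i) = (\<Sum>i<n. t i + (if i = j then 1 else 0))"
    by (rule sum.cong) auto
  with assms show ?thesis by (simp add: sum.distrib)
qed

lemma prod_fun_upd:
  fixes f :: "nat \<Rightarrow> nat \<Rightarrow> 'a::comm_monoid_mult"
  assumes "j < n"
  shows "(\<Prod>i<n. f i ((t(j := m)) i)) = f j m * (\<Prod>i\<in>{..<n}-{j}. f i (t i))"
proof -
  have "(\<Prod>i\<in>{..<n}-{j}. f i ((t(j := m)) i)) = (\<Prod>i\<in>{..<n}-{j}. f i (t i))"
    by (rule prod.cong) auto
  with assms show ?thesis by (simp add: prod.remove[of "{..<n}" j])
qed

lemma linear_form_moment_Suc:
  "linear_form_moment A b n (Suc k) t =
     (\<Sum>j<n. b j * linear_form_moment A b n k (t(j := Suc (t j))))"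
proof -
  have upd: "(\<Prod>i<n. x i ^ (t(j := Suc (t j))) i) = x j * (\<Prod>i<n. x i ^ t i)" if "j < n" for x j
    using prod_fun_upd[OF that, of "\<lambda>i m. x i ^ m"] prod.remove[of "{..<n}" j "\<lambda>i. x i ^ t i"] that
    by (simp add: mult.assoc)
  have "(\<Prod>i<n. x i ^ t i) * linear_form b n x ^ Suc k =
      (\<Sum>j<n. b j * (x j * (\<Prod>i<n. x i ^ t i)) * linear_form b n x ^ k)" for x
    by (simp add: linear_form_def sum_distrib_left sum_distrib_right mult_ac)
  also have "\<dots> x = (\<Sum>j<n. b j * ((\<Prod>i<n. x i ^ (t(j := Suc (t j))) i) * linear_form b n x ^ k))" for x
  proof (rule sum.cong[OF refl])
    fix j assume "j \<in> {..<n}"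
    then show "b j * (x j * (\<Prod>i<n. x i ^ t i)) * linear_form b n x ^ k =
        b j * ((\<Prod>i<n. x i ^ (t(j := Suc (t j))) i) * linear_form b n x ^ k)"
      by (subst upd) (simp_all add: mult.assoc)
  qed
  finally show ?thesis
    by (simp add: linear_form_moment_def lagrange_functional_sum lagrange_functional_cmult)
qed

lemma linear_form_moment_eq_0:
  fixes A :: "'a::field set"
  assumes "finite A" and "A \<noteq> {}"
  shows "(\<Sum>i<n. t i) + k < n * (card A - 1) \<Longrightarrow> linear_form_moment A b n k t = 0"
proof (induction k arbitrary: t)
  case 0
  have "\<not> (\<forall>i<n. t i = card A - 1)"
  proof
    assume "\<forall>i<n. t i = card A - 1"
    then have "(\<Sum>i<n. t i) = n * (card A - 1)" by simp
    with 0 show False by simp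
  qed
  with 0 assms show ?case
    by (simp add: linear_form_moment_def lagrange_functional_monomial)
next
  case (Suc k)
  have "linear_form_moment A b n k (t(j := Suc (t j))) = 0" if "j < n" for j
    using Suc.prems by (intro Suc.IH) (simp only: sum_fun_upd_Suc[OF that]; simp)
  then show ?case
    by (simp add: linear_form_moment_Suc)
qed

lemma all_eq_if_sum_eq_mult:
  fixes t :: "nat \<Rightarrow> nat"
  assumes le: "\<forall>i<n. t i \<le> K" and sum: "(\<Sum>i<n. t i) = n * K" and i: "i < n"
  shows "t i = K"
proof (rule ccontr)
  assume "t i \<noteq> K"
  with le i have "(\<Sum>i<n. t i) < (\<Sum>i<n. K)"
    by (intro sum_strict_mono_ex1) force+
  with sum show False by simp
qed

lemma sum_divided_power_fun_upd:
  fixes b :: "nat \<Rightarrow> 'a::field"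
  assumes fact_K: "of_nat (fact K) \<noteq> (0::'a)" and le: "\<forall>i<n. t i \<le> K"
    and sum_K: "(\<Sum>j<n. K - t j) = Suc k"
  shows "(\<Sum>j<n. b j * (if \<forall>i<n. (t(j := Suc (t j))) i \<le> K
            then of_nat (fact k) * (\<Prod>i<n. divided_power (b i) (K - (t(j := Suc (t j))) i)) else 0)) =
         of_nat (fact (Suc k)) * (\<Prod>i<n. divided_power (b i) (K - t i))"
proof -
  let ?u = "\<lambda>j. t(j := Suc (t j))"
  define F where "F = (\<Prod>i<n. divided_power (b i) (K - t i))"
  have summand: "b j * (if \<forall>i<n. ?u j i \<le> K
      then of_nat (fact k) * (\<Prod>i<n. divided_power (b i) (K - ?u j i)) else 0) =
      of_nat (fact k) * (of_nat (K - t j) * F)" if j: "j < n" for j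
  proof (cases "t j = K")
    case True
    then have "\<not> ?u j j \<le> K" by simp
    with j True show ?thesis by auto
  next
    case False
    with le j have lt: "t j < K" by (simp add: order.not_eq_order_implies_strict)
    let ?R = "\<Prod>i\<in>{..<n}-{j}. divided_power (b i) (K - t i)"
    have step: "b j * divided_power (b j) (K - Suc (t j)) = of_nat (K - t j) * divided_power (b j) (K - t j)"
      using divided_power_Suc[of "K - Suc (t j)" "b j"] of_nat_fact_neq_0_mono[OF fact_K, of "K - t j"] lt
      by (simp add: Suc_diff_Suc)
    have "\<forall>i<n. ?u j i \<le> K" using le lt by simp
    moreover have "(\<Prod>i<n. divided_power (b i) (K - ?u j i)) = divided_power (b j) (K - Suc (t j)) * ?R"
      using prod_fun_upd[OF j, of "\<lambda>i m. divided_power (b i) (K - m)"] by simp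
    ultimately have "b j * (if \<forall>i<n. ?u j i \<le> K
        then of_nat (fact k) * (\<Prod>i<n. divided_power (b i) (K - ?u j i)) else 0) =
        of_nat (fact k) * (b j * divided_power (b j) (K - Suc (t j)) * ?R)"
      by (simp add: mult_ac)
    also have "\<dots> = of_nat (fact k) * (of_nat (K - t j) * F)"
      unfolding step F_def using j by (simp add: prod.remove[of "{..<n}" j] mult_ac)
    finally show ?thesis .
  qed
  have "(\<Sum>j<n. b j * (if \<forall>i<n. ?u j i \<le> K
      then of_nat (fact k) * (\<Prod>i<n. divided_power (b i) (K - ?u j i)) else 0)) =
      (\<Sum>j<n. of_nat (fact k) * (of_nat (K - t j) * F))"
    by (rule sum.cong[OF refl]) (simp only: summand lessThan_iff)
  also have "\<dots> = of_nat (fact k) * (of_nat (\<Sum>j<n. K - t j) * F)"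
    by (simp only: sum_distrib_left sum_distrib_right of_nat_sum)
  also have "\<dots> = of_nat (fact (Suc k)) * F"
    by (simp add: sum_K fact_Suc algebra_simps)
  finally show ?thesis by (simp only: F_def)
qed

text \<open>Multinomial expansion of \<open>(\<Sum>i. b i * x i)^k\<close>: only the monomials raising every \<open>x i\<close> to
  exactly \<open>|A| - 1\<close> survive the functional.\<close>
lemma linear_form_moment_top:
  fixes A :: "'a::field set"
  defines "K \<equiv> card A - 1"
  assumes fin: "finite A" and ne: "A \<noteq> {}" and fact_K: "of_nat (fact K) \<noteq> (0::'a)"
  shows "(\<Sum>i<n. t i) + k = n * K \<Longrightarrow>
    linear_form_moment A b n k t =
      (if \<forall>i<n. t i \<le> K then of_nat (fact k) * (\<Prod>i<n. divided_power (b i) (K - t i)) else 0)"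
proof (induction k arbitrary: t)
  case 0
  have "\<forall>i<n. t i = K" if "\<forall>i<n. t i \<le> K"
    using all_eq_if_sum_eq_mult[OF that] 0 by simp
  with 0 fin ne show ?case
    by (auto simp: K_def linear_form_moment_def lagrange_functional_monomial divided_power_def)
next
  case (Suc k)
  let ?u = "\<lambda>j. t(j := Suc (t j))"
  have IH: "linear_form_moment A b n k (?u j) =
      (if \<forall>i<n. ?u j i \<le> K then of_nat (fact k) * (\<Prod>i<n. divided_power (b i) (K - ?u j i)) else 0)"
    if "j < n" for j
    using Suc.prems by (intro Suc.IH) (simp only: sum_fun_upd_Suc[OF that]; simp)
  have moment: "linear_form_moment A b n (Suc k) t = (\<Sum>j<n. b j * (if \<forall>i<n. ?u j i \<le> K
      then of_nat (fact k) * (\<Prod>i<n. divided_power (b i) (K - ?u j i)) else 0))"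
    unfolding linear_form_moment_Suc by (rule sum.cong[OF refl]) (simp only: IH lessThan_iff)
  show ?case
  proof (cases "\<forall>i<n. t i \<le> K")
    case False
    note not_all_le = this
    then obtain i where i: "i < n" "K < t i" by (auto simp: not_le)
    then have "\<not> (\<forall>i<n. ?u j i \<le> K)" for j by (auto simp: not_le)
    then have "linear_form_moment A b n (Suc k) t = 0"
      unfolding moment by (simp only: if_False mult_zero_right sum.neutral_const)
    then show ?thesis unfolding if_not_P[OF not_all_le] .
  next
    case True
    note all_le = this
    have "(\<Sum>j<n. K - t j) = (\<Sum>j<n. K) - (\<Sum>j<n. t j)"
      using all_le by (intro sum_subtractf_nat) auto
    with Suc.prems have "(\<Sum>j<n. K - t j) = Suc k" by simp
    then show ?thesis
      unfolding moment if_P[OF all_le] by (rule sum_divided_power_fun_upd[OF fact_K all_le])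
  qed
qed

section \<open>Vandermonde and divided power determinants\<close>

lemma det_mat_permutes:
  "det (mat n n f) = (\<Sum>p\<in>{p. p permutes {..<n}}. signof p * (\<Prod>i<n. f (i, p i)))"
proof -
  have "det (mat n n f) =
      (\<Sum>p\<in>{p. p permutes {0..<n}}. signof p * (\<Prod>i=0..<n. mat n n f $$ (i, p i)))"
    by (rule det_def') simp
  also have "\<dots> = (\<Sum>p\<in>{p. p permutes {..<n}}. signof p * (\<Prod>i<n. f (i, p i)))"
  proof (rule sum.cong)
    fix p assume "p \<in> {p. p permutes {..<n}}"
    then have "(\<Prod>i=0..<n. mat n n f $$ (i, p i)) = (\<Prod>i<n. f (i, p i))"
      unfolding atLeast0LessThan
      by (intro prod.cong) (use permutes_in_image[of p "{..<n}"] in auto)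
    then show "signof p * (\<Prod>i=0..<n. mat n n f $$ (i, p i)) = signof p * (\<Prod>i<n. f (i, p i))"
      by simp
  qed (simp add: atLeast0LessThan)
  finally show ?thesis .
qed

lemma prod_if_zero:
  fixes f :: "'b \<Rightarrow> 'a::comm_semiring_1"
  shows "finite S \<Longrightarrow> (\<Prod>i\<in>S. if P i then f i else 0) = (if \<forall>i\<in>S. P i then \<Prod>i\<in>S. f i else 0)"
  by (induction S rule: finite_induct) auto

definition vandermonde :: "nat \<Rightarrow> (nat \<Rightarrow> 'a::comm_ring_1) \<Rightarrow> 'a" where
  "vandermonde n x = det (mat n n (\<lambda>(i, j). x i ^ j))"

lemma vandermonde_permutes:
  "vandermonde n x = (\<Sum>p\<in>{p. p permutes {..<n}}. signof p * (\<Prod>i<n. x i ^ p i))"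
  by (simp add: vandermonde_def det_mat_permutes)

lemma vandermonde_eq_0:
  assumes "\<not> inj_on x {..<n}"
  shows "vandermonde n x = 0"
proof -
  from assms obtain i j where "i < n" "j < n" "i \<noteq> j" "x i = x j"
    unfolding inj_on_def by auto
  then show ?thesis unfolding vandermonde_def
    by (intro det_identical_rows[of _ n i j]) (auto intro!: eq_vecI)
qed

definition divided_power_matrix :: "nat \<Rightarrow> (nat \<Rightarrow> 'a::field) \<Rightarrow> nat \<Rightarrow> (nat \<Rightarrow> nat) \<Rightarrow> 'a mat" where
  "divided_power_matrix K b n e =
     mat n n (\<lambda>(i, j). if e i + j \<le> K then divided_power (b i) (K - (e i + j)) else 0)"

lemma det_divided_power_matrix:
  "det (divided_power_matrix K b n e) = (\<Sum>p\<in>{p. p permutes {..<n}}. signof p *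
     (if \<forall>i<n. e i + p i \<le> K then \<Prod>i<n. divided_power (b i) (K - (e i + p i)) else 0))"
  unfolding divided_power_matrix_def det_mat_permutes
  by (intro sum.cong) (auto simp: prod_if_zero)

lemma sum_permutes_lessThan: "p permutes {..<n} \<Longrightarrow> (\<Sum>i<n. p i) = (\<Sum>i<n. i)"
  using sum.permute[of p "{..<n}" "\<lambda>i. i"] by simp

lemma lagrange_functional_vandermonde_poly:
  fixes A :: "'a::field set" and P :: "'a poly"
  defines "K \<equiv> card A - 1"
  assumes fin: "finite A" and ne: "A \<noteq> {}" and fact_K: "of_nat (fact K) \<noteq> (0::'a)"
    and deg: "(\<Sum>i<n. e i) + (\<Sum>i<n. i) + degree P = n * K"
  shows "lagrange_functional A n (\<lambda>x. (\<Prod>i<n. x i ^ e i) * vandermonde n x * poly P (linear_form b n x)) =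
    of_nat (fact (degree P)) * lead_coeff P * det (divided_power_matrix K b n e)"
proof -
  define PS where "PS = {p. p permutes {..<n}}"
  define M where "M k = (\<Sum>p\<in>PS. signof p * linear_form_moment A b n k (\<lambda>i. e i + p i))" for k
  have deg_perm: "(\<Sum>i<n. e i + p i) + degree P = n * K" if "p \<in> PS" for p
    using that deg by (simp add: PS_def sum.distrib sum_permutes_lessThan)
  have "(\<Prod>i<n. x i ^ e i) * vandermonde n x * poly P (linear_form b n x) =
     (\<Sum>k\<le>degree P. coeff P k * (\<Sum>p\<in>PS. signof p *
        ((\<Prod>i<n. x i ^ (e i + p i)) * linear_form b n x ^ k)))" for x
    unfolding vandermonde_permutes poly_altdef PS_def
    by (simp add: sum_distrib_left sum_distrib_right power_add prod.distrib mult_ac) (rule sum.swap)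
  then have "lagrange_functional A n (\<lambda>x. (\<Prod>i<n. x i ^ e i) * vandermonde n x * poly P (linear_form b n x)) =
     (\<Sum>k\<le>degree P. coeff P k * M k)"
    by (simp add: M_def linear_form_moment_def lagrange_functional_sum lagrange_functional_cmult)
  also have "\<dots> = lead_coeff P * M (degree P)"
  proof -
    have "M k = 0" if k: "k < degree P" for k
    proof -
      have "linear_form_moment A b n k (\<lambda>i. e i + p i) = 0" if "p \<in> PS" for p
        using deg_perm[OF that] k by (intro linear_form_moment_eq_0[OF fin ne]) (simp add: K_def)
      then show ?thesis by (simp add: M_def)
    qed
    then show ?thesis by (simp add: sum.atMost_Suc_shift sum.remove[of _ "degree P"])
  qed
  also have "M (degree P) = of_nat (fact (degree P)) * det (divided_power_matrix K b n e)"
  proof -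
    have "linear_form_moment A b n (degree P) (\<lambda>i. e i + p i) = of_nat (fact (degree P)) *
        (if \<forall>i<n. e i + p i \<le> K then \<Prod>i<n. divided_power (b i) (K - (e i + p i)) else 0)"
      if "p \<in> PS" for p
      unfolding if_distrib[of "\<lambda>y. of_nat (fact (degree P)) * y"] mult_zero_right K_def
      using deg_perm[OF that]
      by (intro linear_form_moment_top[OF fin ne fact_K[unfolded K_def]]) (simp add: K_def)
    then show ?thesis
      unfolding M_def det_divided_power_matrix sum_distrib_left PS_def[symmetric]
      by (intro sum.cong refl) (simp only: mult.left_commute)
  qed
  finally show ?thesis by (simp add: mult_ac)
qed

definition prior_occurrences :: "(nat \<Rightarrow> 'a) \<Rightarrow> nat \<Rightarrow> nat" where
  "prior_occurrences b i = card {j\<in>{..<i}. b j = b i}"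

lemma prior_occurrences_image:
  "prior_occurrences b ` {i. i < n \<and> b i = c} = {..<card {i. i < n \<and> b i = c}}"
proof -
  define G where "G = {i. i < n \<and> b i = c}"
  have mono: "prior_occurrences b i < prior_occurrences b i'" if "i \<in> G" "i' \<in> G" "i < i'" for i i'
  proof -
    have "{j\<in>{..<i}. b j = b i} \<subset> {j\<in>{..<i'}. b j = b i'}"
      using that unfolding G_def by auto
    then show ?thesis unfolding prior_occurrences_def by (intro psubset_card_mono) auto
  qed
  have "inj_on (prior_occurrences b) G"
  proof (rule inj_onI)
    fix i i' assume "i \<in> G" "i' \<in> G" "prior_occurrences b i = prior_occurrences b i'"
    then show "i = i'" using mono[of i i'] mono[of i' i] by (cases i i' rule: linorder_cases) auto
  qed
  moreover have "prior_occurrences b ` G \<subseteq> {..<card G}"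
  proof
    fix x assume "x \<in> prior_occurrences b ` G"
    then obtain i where i: "i \<in> G" "x = prior_occurrences b i" by auto
    then have "{j\<in>{..<i}. b j = b i} \<subset> G" unfolding G_def by auto
    then show "x \<in> {..<card G}"
      unfolding i prior_occurrences_def G_def by (auto intro: psubset_card_mono)
  qed
  ultimately show ?thesis
    unfolding G_def[symmetric] by (intro card_subset_eq) (auto simp: card_image)
qed

definition divided_monomial :: "nat \<Rightarrow> 'a::field poly" where
  "divided_monomial m = monom (inverse (of_nat (fact m))) m"

lemma poly_divided_monomial: "poly (divided_monomial m) c = divided_power c m"
  by (simp add: divided_monomial_def divided_power_def poly_monom field_simps)

lemma coeff_divided_monomial:
  "coeff (divided_monomial m) r = (if r = m then inverse (of_nat (fact m)) else 0)"
  by (simp add: divided_monomial_def coeff_monom)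

lemma higher_pderiv_divided_monomial:
  assumes "of_nat (fact m) \<noteq> (0::'a::field)"
  shows "(pderiv ^^ r) (divided_monomial m :: 'a poly) = (if r \<le> m then divided_monomial (m - r) else 0)"
proof (induction r)
  case (Suc r)
  show ?case
  proof (cases "Suc r \<le> m")
    case True
    then obtain s where s: "m - r = Suc s" by (metis Suc_diff_le diff_Suc_Suc diff_zero)
    have "Suc s \<le> m" using s by simp
    from of_nat_fact_Suc_neq_0D[OF of_nat_fact_neq_0_mono[OF assms this]]
    have "of_nat (Suc s) * inverse (of_nat (fact (Suc s))) = (inverse (of_nat (fact s)) :: 'a)"
      unfolding of_nat_fact_Suc by (simp add: field_simps del: of_nat_Suc)
    then have "pderiv (divided_monomial (Suc s) :: 'a poly) = divided_monomial s"
      by (simp add: divided_monomial_def pderiv_monom del: of_nat_Suc)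
    moreover have "m - Suc r = s" using s by simp
    ultimately show ?thesis using Suc True s by simp
  next
    case False
    with Suc show ?thesis
      by (auto simp: divided_monomial_def pderiv_monom le_Suc_eq)
  qed
qed simp

lemma pcompose_monom_1: "pcompose (monom 1 m) q = q ^ m"
  by (induction m) (simp_all add: monom_Suc pcompose_pCons monom_0 one_pCons)

text \<open>Taylor expansion at \<open>c\<close>: the first \<open>m\<close> coefficients of \<open>Q(X + c)\<close> are the
  derivatives \<open>Q\<^sup>(\<^sup>r\<^sup>)(c) / r!\<close>.\<close>
lemma order_ge_if_higher_pderiv_eq_0:
  fixes Q :: "'a::field poly"
  assumes "Q \<noteq> 0" and zero: "\<forall>r<m. poly ((pderiv ^^ r) Q) c = 0"
    and fact: "\<forall>r<m. of_nat (fact r) \<noteq> (0::'a)"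
  shows "m \<le> order c Q"
proof -
  define T where "T = pcompose Q [:c, 1:]"
  have shift: "(pderiv ^^ r) T = pcompose ((pderiv ^^ r) Q) [:c, 1:]" for r
    unfolding T_def by (induction r) (simp_all add: pderiv_pcompose pderiv_pCons)
  have "coeff T r = 0" if "r < m" for r
  proof -
    have "of_nat (fact r) * coeff T r = coeff ((pderiv ^^ r) T) 0"
      using coeff_higher_pderiv[of r T 0] by (simp add: pochhammer_fact flip: pochhammer_of_nat)
    also have "\<dots> = 0"
      using zero that by (simp add: shift poly_0_coeff_0[symmetric] poly_pcompose)
    finally show ?thesis using fact that by simp
  qed
  then obtain U where "T = monom 1 m * U"
    using monom_1_dvd_iff' by blast
  have "Q = pcompose Q (pcompose [:c, 1:] [:-c, 1:])" by (simp add: pcompose_pCons)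
  also have "\<dots> = pcompose T [:-c, 1:]" by (simp add: T_def pcompose_assoc)
  also have "\<dots> = [:-c, 1:] ^ m * pcompose U [:-c, 1:]"
    by (simp add: \<open>T = monom 1 m * U\<close> pcompose_mult pcompose_monom_1)
  finally have "Q = [:-c, 1:] ^ m * pcompose U [:-c, 1:]" .
  with assms(1) show ?thesis
    using order_divides by (metis dvd_triv_left)
qed

lemma sum_order_le_degree_on:
  fixes Q :: "'a::idom poly"
  assumes "Q \<noteq> 0" and "finite R"
  shows "(\<Sum>x\<in>R. order x Q) \<le> degree Q"
proof -
  have "(\<Sum>x\<in>R. order x Q) = (\<Sum>x\<in>R \<inter> {x. poly Q x = 0}. order x Q)"
    using assms(2) by (intro sum.mono_neutral_right) (auto simp: order_root)
  also have "\<dots> \<le> (\<Sum>x | poly Q x = 0. order x Q)"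
    using poly_roots_finite[OF assms(1)] by (intro sum_mono2) auto
  also have "\<dots> \<le> degree Q" by (rule sum_order_le_degree[OF assms(1)])
  finally show ?thesis .
qed

text \<open>Row \<open>i\<close> of \<open>B v\<close>, for the divided power matrix \<open>B\<close> with shifts \<open>e\<close>, is the
  \<open>e i\<close>-th derivative at \<open>b i\<close> of \<open>\<Sum>j. v j X^(K-j)/(K-j)!\<close>.\<close>
lemma poly_higher_pderiv_divided_monomials:
  fixes c :: "'a::field"
  assumes "n \<le> Suc K" and "of_nat (fact K) \<noteq> (0::'a)"
  shows "poly ((pderiv ^^ r) (\<Sum>j<n. smult (v j) (divided_monomial (K - j)))) c =
    (\<Sum>j<n. (if r + j \<le> K then divided_power c (K - (r + j)) else 0) * v j)"
  unfolding higher_pderiv_sum higher_pderiv_smult poly_sum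
  using assms of_nat_fact_neq_0_mono[OF assms(2)]
  by (intro sum.cong)
     (auto simp: higher_pderiv_divided_monomial poly_divided_monomial algebra_simps)

lemma divided_power_rows_independent:
  fixes b :: "nat \<Rightarrow> 'a::field"
  assumes n: "n \<le> Suc K" and fact_K: "of_nat (fact K) \<noteq> (0::'a)" and nz: "\<forall>i<n. b i \<noteq> 0"
    and rows: "\<forall>i<n. (\<Sum>j<n. (if prior_occurrences b i + j \<le> K
       then divided_power (b i) (K - (prior_occurrences b i + j)) else 0) * v j) = 0"
  shows "\<forall>j<n. v j = 0"
proof (rule ccontr)
  let ?G = "\<lambda>c. {i. i < n \<and> b i = c}"
  assume "\<not> ?thesis"
  then obtain j0 where j0: "j0 < n" "v j0 \<noteq> 0" by blast
  define Q where "Q = (\<Sum>j<n. smult (v j) (divided_monomial (K - j) :: 'a poly))"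
  have fact_le: "of_nat (fact m) \<noteq> (0::'a)" if "m \<le> K" for m
    using of_nat_fact_neq_0_mono[OF fact_K that] .
  have coeff_Q: "coeff Q r = (\<Sum>j<n. if r = K - j then v j * inverse (of_nat (fact (K - j))) else 0)" for r
    unfolding Q_def by (auto simp: coeff_sum coeff_divided_monomial intro!: sum.cong)
  have "coeff Q (K - j0) = v j0 * inverse (of_nat (fact (K - j0)))"
    unfolding coeff_Q using j0 n
    by (subst sum.remove[of _ j0]) (auto intro!: sum.neutral split: if_splits)
  with j0 fact_le[of "K - j0"] have Q0: "Q \<noteq> 0" by auto
  have "degree Q \<le> K"
    unfolding Q_def divided_monomial_def
    by (intro degree_sum_le) (auto intro: order_trans[OF degree_smult_le] order_trans[OF degree_monom_le])
  have "monom 1 (Suc K - n) dvd Q"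
    unfolding monom_1_dvd_iff' coeff_Q by (auto intro!: sum.neutral)
  then have ord_0: "Suc K - n \<le> order 0 Q"
    using monom_1_dvd_iff[OF Q0] by blast
  have ord_c: "card (?G c) \<le> order c Q" for c
  proof (rule order_ge_if_higher_pderiv_eq_0[OF Q0])
    show "\<forall>r<card (?G c). poly ((pderiv ^^ r) Q) c = 0"
    proof (intro allI impI)
      fix r assume "r < card (?G c)"
      then have "r \<in> prior_occurrences b ` ?G c" by (simp add: prior_occurrences_image)
      then obtain i where i: "i < n" "b i = c" "r = prior_occurrences b i" by blast
      then show "poly ((pderiv ^^ r) Q) c = 0"
        using rows unfolding Q_def poly_higher_pderiv_divided_monomials[OF n fact_K] i(2)[symmetric] i(3)
        by simp
    qed
    have "card (?G c) \<le> n" using card_mono[of "{..<n}" "?G c"] by auto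
    with n fact_le show "\<forall>r<card (?G c). of_nat (fact r) \<noteq> (0::'a)" by auto
  qed
  have "(\<Sum>c\<in>b ` {..<n}. card (?G c)) = card (\<Union>c\<in>b ` {..<n}. ?G c)"
    by (rule card_UN_disjoint[symmetric]) auto
  also have "(\<Union>c\<in>b ` {..<n}. ?G c) = {..<n}" by auto
  finally have "Suc K \<le> (Suc K - n) + (\<Sum>c\<in>b ` {..<n}. card (?G c))" by simp
  also have "\<dots> \<le> order 0 Q + (\<Sum>c\<in>b ` {..<n}. order c Q)"
    using ord_0 ord_c by (intro add_mono sum_mono)
  also have "\<dots> = (\<Sum>c\<in>insert 0 (b ` {..<n}). order c Q)"
    using nz by (subst sum.insert) auto
  also have "\<dots> \<le> degree Q" by (rule sum_order_le_degree_on[OF Q0]) simp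
  finally show False using \<open>degree Q \<le> K\<close> by simp
qed

lemma det_divided_power_matrix_neq_0:
  fixes b :: "nat \<Rightarrow> 'a::field"
  assumes n: "n \<le> Suc K" and fact_K: "of_nat (fact K) \<noteq> (0::'a)" and nz: "\<forall>i<n. b i \<noteq> 0"
  shows "det (divided_power_matrix K b n (prior_occurrences b)) \<noteq> 0"
proof
  let ?B = "divided_power_matrix K b n (prior_occurrences b)"
  assume "det ?B = 0"
  then obtain v where v: "v \<in> carrier_vec n" "v \<noteq> 0\<^sub>v n" "?B *\<^sub>v v = 0\<^sub>v n"
    using det_0_iff_vec_prod_zero_field[of ?B n] by (auto simp: divided_power_matrix_def)
  have "\<forall>i<n. (\<Sum>j<n. (if prior_occurrences b i + j \<le> K
      then divided_power (b i) (K - (prior_occurrences b i + j)) else 0) * v $ j) = 0"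
  proof (intro allI impI)
    fix i assume "i < n"
    with v(3) have "(?B *\<^sub>v v) $ i = 0" by simp
    with \<open>i < n\<close> v(1) show "(\<Sum>j<n. (if prior_occurrences b i + j \<le> K
        then divided_power (b i) (K - (prior_occurrences b i + j)) else 0) * v $ j) = 0"
      by (simp add: divided_power_matrix_def scalar_prod_def atLeast0LessThan)
  qed
  then have "\<forall>j<n. v $ j = 0" by (rule divided_power_rows_independent[OF n fact_K nz])
  then have "v = 0\<^sub>v n" using v(1) by (intro eq_vecI) auto
  with v(2) show False by simp
qed

section \<open>Pairs of indices with distinct values\<close>

lemma sum_card_2_subsets_prod_fibres:
  fixes b :: "nat \<Rightarrow> 'a"
  shows "(\<Sum>S\<in>{S. S \<subseteq> b ` {..<n} \<and> card S = 2}. \<Prod>v\<in>S. card {i. i < n \<and> b i = v}) =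
     card {(i, j). i < j \<and> j < n \<and> b i \<noteq> b j}"
proof -
  define D where "D = {(i, j). i < j \<and> j < n \<and> b i \<noteq> b j}"
  define SS where "SS = {S. S \<subseteq> b ` {..<n} \<and> card S = 2}"
  define fibre where "fibre S = {p\<in>D. {b (fst p), b (snd p)} = S}" for S
  define G where "G v = {i. i < n \<and> b i = v}" for v
  have "D \<subseteq> {..<n} \<times> {..<n}" by (auto simp: D_def)
  then have "finite D" by (rule finite_subset) simp
  have "finite SS" by (rule finite_subset[of _ "Pow (b ` {..<n})"]) (auto simp: SS_def)
  have D_eq: "D = (\<Union>S\<in>SS. fibre S)"
    by (auto simp: D_def SS_def fibre_def card_2_iff) blast
  have "card (\<Union>S\<in>SS. fibre S) = (\<Sum>S\<in>SS. card (fibre S))"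
    by (rule card_UN_disjoint[OF \<open>finite SS\<close>])
       (auto simp: fibre_def intro: rev_finite_subset[OF \<open>finite D\<close>])
  then have "card D = (\<Sum>S\<in>SS. card (fibre S))"
    unfolding D_eq[symmetric] .
  also have "\<dots> = (\<Sum>S\<in>SS. \<Prod>v\<in>S. card (G v))"
  proof (rule sum.cong[OF refl])
    fix S assume "S \<in> SS"
    then obtain v w where S: "S = {v, w}" "v \<noteq> w" by (auto simp: SS_def card_2_iff)
    define ord where "ord p = (min (fst p) (snd p), max (fst p) (snd p))" for p :: "nat \<times> nat"
    have "inj_on ord (G v \<times> G w)"
    proof (rule inj_onI)
      fix p q assume "p \<in> G v \<times> G w" "q \<in> G v \<times> G w" "ord p = ord q"
      then show "p = q"
        using S(2) by (cases p, cases q) (auto simp: G_def ord_def min_def max_def split: if_splits)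
    qed
    moreover have "ord ` (G v \<times> G w) = fibre S"
    proof
      show "ord ` (G v \<times> G w) \<subseteq> fibre S"
      proof
        fix p assume "p \<in> ord ` (G v \<times> G w)"
        then obtain i j where ij: "i < n" "b i = v" "j < n" "b j = w" "p = ord (i, j)"
          by (auto simp: G_def)
        moreover from ij S(2) have "i \<noteq> j" by auto
        ultimately show "p \<in> fibre S"
          using S by (cases "i < j") (auto simp: fibre_def D_def ord_def min_def max_def)
      qed
      show "fibre S \<subseteq> ord ` (G v \<times> G w)"
      proof
        fix p assume "p \<in> fibre S"
        then obtain i j where ij: "p = (i, j)" "i < j" "j < n" "{b i, b j} = {v, w}"
          by (auto simp: fibre_def D_def S)
        then have "(i, j) \<in> G v \<times> G w \<and> ord (i, j) = p \<or> (j, i) \<in> G v \<times> G w \<and> ord (j, i) = p"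
          by (auto simp: G_def ord_def doubleton_eq_iff)
        then show "p \<in> ord ` (G v \<times> G w)" by blast
      qed
    qed
    ultimately have "card (fibre S) = card (G v) * card (G w)"
      by (metis card_image card_cartesian_product)
    with S show "card (fibre S) = (\<Prod>x\<in>S. card (G x))" by simp
  qed
  finally show ?thesis by (simp add: D_def SS_def G_def)
qed

lemma card_distinct_value_pairs_plus_prior_occurrences:
  fixes b :: "nat \<Rightarrow> 'a"
  shows "card {(i, j). i < j \<and> j < n \<and> b i \<noteq> b j} + (\<Sum>j<n. prior_occurrences b j) = (\<Sum>j<n. j)"
proof -
  have "{(i, j). i < j \<and> j < n \<and> b i \<noteq> b j} = (\<Union>j<n. (\<lambda>i. (i, j)) ` {i. i < j \<and> b i \<noteq> b j})"
    by auto
  then have "card {(i, j). i < j \<and> j < n \<and> b i \<noteq> b j} = (\<Sum>j<n. card {i. i < j \<and> b i \<noteq> b j})"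
    by (simp only:) (subst card_UN_disjoint, auto simp: card_image inj_on_def)
  moreover have "card {i. i < j \<and> b i \<noteq> b j} + prior_occurrences b j = j" for j
  proof -
    have "{i. i < j \<and> b i \<noteq> b j} \<union> {i\<in>{..<j}. b i = b j} = {..<j}" by auto
    then show ?thesis
      unfolding prior_occurrences_def by (subst card_Un_disjoint[symmetric]) auto
  qed
  ultimately show ?thesis by (simp add: sum.distrib[symmetric])
qed

text \<open>Every index \<open>k \<noteq> i0\<close> forms a pair of distinct values with \<open>i0\<close> or with \<open>j0\<close>.\<close>
lemma card_distinct_value_pairs_ge:
  fixes b :: "nat \<Rightarrow> 'a"
  assumes "(i0, j0) \<in> {(i, j). i < j \<and> j < n \<and> b i \<noteq> b j}"
  shows "n - 1 \<le> card {(i, j). i < j \<and> j < n \<and> b i \<noteq> b j}"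
proof -
  let ?D = "{(i, j). i < j \<and> j < n \<and> b i \<noteq> b j}"
  define partner where "partner k = (if b k = b i0 then j0 else i0)" for k
  define f where "f k = (min k (partner k), max k (partner k))" for k
  have partner: "partner k \<in> {i0, j0}" "b (partner k) \<noteq> b k" for k
    using assms by (auto simp: partner_def)
  have pair_f: "{fst (f k), snd (f k)} = {k, partner k}" for k
    by (auto simp: f_def min_def max_def)
  have "inj_on f ({..<n} - {i0})"
  proof (rule inj_onI)
    fix k k' assume k: "k \<in> {..<n} - {i0}" "k' \<in> {..<n} - {i0}" and "f k = f k'"
    then have eq: "{k, partner k} = {k', partner k'}"
      using pair_f[of k] pair_f[of k'] by simp
    show "k = k'"
    proof (rule ccontr)
      assume "k \<noteq> k'"
      with eq have "k = partner k'" "k' = partner k" by (auto simp: doubleton_eq_iff)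
      then have "k = j0" "k' = j0"
        using k partner(1)[of k] partner(1)[of k'] by auto
      with \<open>k \<noteq> k'\<close> show False by simp
    qed
  qed
  moreover have "f ` ({..<n} - {i0}) \<subseteq> ?D"
  proof
    fix p assume "p \<in> f ` ({..<n} - {i0})"
    then obtain k where k: "k < n" "p = f k" by auto
    have "partner k < n" using partner(1)[of k] assms by auto
    moreover have "b k \<noteq> b (partner k)" using partner(2)[of k] by simp
    moreover from this have "k \<noteq> partner k" by auto
    ultimately show "p \<in> ?D"
      using k by (cases "k < partner k") (auto simp: f_def)
  qed
  moreover have "finite ?D"
    by (rule finite_subset[of _ "{..<n} \<times> {..<n}"]) auto
  ultimately have "card ({..<n} - {i0}) \<le> card ?D"
    by (intro card_inj_on_le)
  with assms show ?thesis by simp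
qed

section \<open>Restricted sums\<close>

lemma of_nat_fact_neq_0_below_char:
  assumes "CHAR('a) = 0 \<or> m < CHAR('a)"
  shows "of_nat (fact m) \<noteq> (0::'a::idom)"
proof -
  have "(of_nat k :: 'a) \<noteq> 0" if "k \<in> {1..m}" for k
  proof
    assume "(of_nat k :: 'a) = 0"
    then have "CHAR('a) dvd k" by (simp add: of_nat_eq_0_iff_char_dvd)
    with that assms show False by (auto dest: dvd_imp_le)
  qed
  then show ?thesis by (simp add: fact_prod of_nat_prod)
qed

lemma ex_poly_vanishing_of_degree:
  fixes C :: "'a::field set"
  assumes "finite C" and "card C \<le> d"
  obtains P where "P \<noteq> 0" and "degree P = d" and "\<forall>c\<in>C. poly P c = 0"
proof
  let ?P = "(\<Prod>c\<in>C. [:-c, 1:]) * monom (1::'a) (d - card C)"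
  show "?P \<noteq> 0" using assms(1) by (simp add: prod_zero_iff)
  then show "degree ?P = d"
    using assms by (simp add: degree_mult_eq degree_prod_monic_linear degree_monom_eq)
  show "\<forall>c\<in>C. poly ?P c = 0"
    using assms(1) by (auto simp: poly_prod intro!: prod_zero)
qed

lemma restricted_sums_finite:
  assumes "finite A"
  shows "finite (restricted_sums A a n)"
proof (rule finite_subset)
  show "restricted_sums A a n \<subseteq> (\<lambda>x. \<Sum>i=1..n. a i * x i) ` ({1..n} \<rightarrow>\<^sub>E A)"
  proof
    fix s assume "s \<in> restricted_sums A a n"
    then obtain x where x: "s = (\<Sum>i=1..n. a i * x i)" "\<forall>i\<in>{1..n}. x i \<in> A"
      unfolding restricted_sums_def by auto
    then have "restrict x {1..n} \<in> {1..n} \<rightarrow>\<^sub>E A" and "s = (\<Sum>i=1..n. a i * restrict x {1..n} i)"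
      by auto
    then show "s \<in> (\<lambda>x. \<Sum>i=1..n. a i * x i) ` ({1..n} \<rightarrow>\<^sub>E A)" by blast
  qed
  show "finite ((\<lambda>x. \<Sum>i=1..n. a i * x i) ` ({1..n} \<rightarrow>\<^sub>E A))"
    using assms by (intro finite_imageI finite_PiE) auto
qed

lemma restricted_sums_nonempty:
  assumes "finite A" and "n \<le> card A"
  shows "restricted_sums A a n \<noteq> {}"
proof -
  obtain x where "x ` {1..n} \<subseteq> A" and "inj_on x {1..n}"
    using card_le_inj[of "{1..n}" A] assms by auto
  then have "(\<Sum>i=1..n. a i * x i) \<in> restricted_sums A a n"
    unfolding restricted_sums_def by auto
  then show ?thesis by auto
qed

lemma linear_form_Suc_in_restricted_sums:
  assumes "x \<in> {..<n} \<rightarrow>\<^sub>E A" and "inj_on x {..<n}"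
  shows "linear_form (\<lambda>i. a (Suc i)) n x \<in> restricted_sums A a n"
proof -
  define y where "y i = x (i - 1)" for i
  have "inj_on y {1..n}"
  proof (rule inj_onI)
    fix i j assume i: "i \<in> {1..n}" and j: "j \<in> {1..n}" and "y i = y j"
    then have "x (i - 1) = x (j - 1)" by (simp add: y_def)
    moreover have "i - 1 \<in> {..<n}" "j - 1 \<in> {..<n}" using i j by auto
    ultimately have "i - 1 = j - 1" by (rule inj_onD[OF assms(2)])
    with i j show "i = j" by (simp only: atLeastAtMost_iff) linarith
  qed
  moreover have "\<forall>i\<in>{1..n}. y i \<in> A"
  proof
    fix i assume "i \<in> {1..n}"
    then have "i - 1 \<in> {..<n}" by auto
    with assms(1) show "y i \<in> A" unfolding y_def by (rule PiE_mem)
  qed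
  moreover have "linear_form (\<lambda>i. a (Suc i)) n x = (\<Sum>i=1..n. a i * y i)"
    unfolding linear_form_def y_def using sum.atLeast1_atMost_eq[of "\<lambda>i. a i * x (i - 1)" n] by simp
  ultimately show ?thesis
    unfolding restricted_sums_def by (intro CollectI exI[of _ y]) simp
qed

lemma pair_mult_sum_eq_card_distinct_value_pairs:
  "pair_mult_sum a n = card {(i, j). i < j \<and> j < n \<and> a (Suc i) \<noteq> a (Suc j)}"
proof -
  have interval: "{1..n} = Suc ` {..<n}" by (simp add: image_Suc_lessThan)
  have "{i\<in>{1..n}. a i = v} = Suc ` {i. i < n \<and> a (Suc i) = v}" for v
    unfolding interval by auto
  then have "mult_of a n v = card {i. i < n \<and> a (Suc i) = v}" for v
    unfolding mult_of_def by (simp add: card_image)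
  moreover have "a ` {1..n} = (\<lambda>i. a (Suc i)) ` {..<n}"
    unfolding interval by (simp only: image_image)
  ultimately show ?thesis
    unfolding pair_mult_sum_def by (simp add: sum_card_2_subsets_prod_fibres)
qed

lemma dval_degree_identity:
  assumes "n \<le> card A"
  shows "(\<Sum>i<n. prior_occurrences (\<lambda>i. a (Suc i)) i) + (\<Sum>i<n. i) + dval A a n = n * (card A - 1)"
proof -
  have "(\<Sum>i<n. i) * 2 = n * (n - 1)" by (induction n) (auto simp: algebra_simps)
  moreover have "n * (n - 1) + n * (card A - n) = n * (card A - 1)"
    using assms by (simp add: diff_mult_distrib2 algebra_simps)
  ultimately show ?thesis
    using card_distinct_value_pairs_plus_prior_occurrences[of n "\<lambda>i. a (Suc i)"]
    by (simp add: dval_def pair_mult_sum_eq_card_distinct_value_pairs)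
qed

lemma card_minus_one_le_dval:
  assumes "n \<le> card A" and "dval A a n \<noteq> 0"
  shows "card A - 1 \<le> dval A a n"
proof (cases "n < card A")
  case True
  have "n \<noteq> 0"
    using assms dval_degree_identity[OF assms(1), of a] by (cases "n = 0") auto
  have "(n - 1) * 1 \<le> (n - 1) * (card A - n)"
    using True by (intro mult_le_mono2) simp
  then have "card A - 1 \<le> (card A - n) + (n - 1) * (card A - n)"
    using True \<open>n \<noteq> 0\<close> by linarith
  also have "\<dots> = n * (card A - n)"
    using \<open>n \<noteq> 0\<close> by (cases n) auto
  finally show ?thesis by (simp add: dval_def)
next
  case False
  let ?D = "{(i, j). i < j \<and> j < n \<and> a (Suc i) \<noteq> a (Suc j)}"
  from False assms(1) have d: "dval A a n = card ?D"
    by (simp add: dval_def pair_mult_sum_eq_card_distinct_value_pairs)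
  with assms(2) have "0 < card ?D" by simp
  then have "?D \<noteq> {}" unfolding card_gt_0_iff by (rule conjunct1)
  then obtain p where "p \<in> ?D" by blast
  moreover obtain i0 j0 where "p = (i0, j0)" by (cases p)
  ultimately have "n - 1 \<le> card ?D"
    using card_distinct_value_pairs_ge[of i0 j0 n "\<lambda>i. a (Suc i)"] by simp
  with d False assms(1) show ?thesis by simp
qed

lemma ex_inj_tuple_poly_linear_form_neq_0:
  fixes A :: "'a::field set" and b :: "nat \<Rightarrow> 'a" and P :: "'a poly"
  assumes fin: "finite A" and ne: "A \<noteq> {}" and n: "n \<le> card A" and nz: "\<forall>i<n. b i \<noteq> 0"
    and "P \<noteq> 0" and fact_K: "of_nat (fact (card A - 1)) \<noteq> (0::'a)"
    and fact_deg: "of_nat (fact (degree P)) \<noteq> (0::'a)"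
    and deg: "(\<Sum>i<n. prior_occurrences b i) + (\<Sum>i<n. i) + degree P = n * (card A - 1)"
  obtains x where "x \<in> {..<n} \<rightarrow>\<^sub>E A" and "inj_on x {..<n}" and "poly P (linear_form b n x) \<noteq> 0"
proof -
  let ?f = "\<lambda>x. (\<Prod>i<n. x i ^ prior_occurrences b i) * vandermonde n x * poly P (linear_form b n x)"
  have "n \<le> Suc (card A - 1)" using n by linarith
  with nz fact_K have "det (divided_power_matrix (card A - 1) b n (prior_occurrences b)) \<noteq> 0"
    by (intro det_divided_power_matrix_neq_0)
  with \<open>P \<noteq> 0\<close> fact_deg have L: "lagrange_functional A n ?f \<noteq> 0"
    by (simp add: lagrange_functional_vandermonde_poly[OF fin ne fact_K deg])
  have "\<not> (\<forall>x\<in>{..<n} \<rightarrow>\<^sub>E A. ?f x = 0)"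
  proof
    assume "\<forall>x\<in>{..<n} \<rightarrow>\<^sub>E A. ?f x = 0"
    then have "lagrange_functional A n ?f = 0"
      unfolding lagrange_functional_def by (intro sum.neutral) simp
    with L show False by contradiction
  qed
  then obtain x where x: "x \<in> {..<n} \<rightarrow>\<^sub>E A" and "?f x \<noteq> 0" by blast
  then have "vandermonde n x \<noteq> 0" and "poly P (linear_form b n x) \<noteq> 0" by auto
  then show ?thesis using that x vandermonde_eq_0 by blast
qed

theorem mainTheorem2:
  fixes A :: "'a::field set" and a :: "nat \<Rightarrow> 'a" and n :: nat
  assumes "finite A"
    and "n \<le> card A"
    and "\<forall>i\<in>{1..n}. a i \<noteq> 0"
    and "CHAR('a) = 0 \<or> CHAR('a) > dval A a n"
  shows "card (restricted_sums A a n) \<ge> dval A a n + 1"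
proof (rule ccontr)
  let ?C = "restricted_sums A a n" and ?d = "dval A a n" and ?b = "\<lambda>i. a (Suc i)"
  assume "\<not> ?thesis"
  then have small: "card ?C \<le> ?d" by simp
  then obtain P where P: "P \<noteq> 0" "degree P = ?d" "\<forall>c\<in>?C. poly P c = 0"
    using ex_poly_vanishing_of_degree[OF restricted_sums_finite[OF assms(1)]] by blast
  note deg = dval_degree_identity[OF assms(2), of a]
  have "0 < card ?C"
    using restricted_sums_nonempty[OF assms(1,2)] restricted_sums_finite[OF assms(1)]
    by (simp add: card_gt_0_iff)
  with small have "?d \<noteq> 0" by simp
  with deg assms(2) have "A \<noteq> {}" by (cases "n = 0") auto
  have fact: "of_nat (fact m) \<noteq> (0::'a)" if "m \<le> ?d" for m
    using assms(4) that by (intro of_nat_fact_neq_0_below_char) auto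
  obtain x where "x \<in> {..<n} \<rightarrow>\<^sub>E A" "inj_on x {..<n}" "poly P (linear_form ?b n x) \<noteq> 0"
  proof (rule ex_inj_tuple_poly_linear_form_neq_0[OF assms(1) \<open>A \<noteq> {}\<close> assms(2) _ P(1)])
    show "\<forall>i<n. ?b i \<noteq> 0" using assms(3) by auto
    show "of_nat (fact (card A - 1)) \<noteq> (0::'a)"
      using fact card_minus_one_le_dval[OF assms(2) \<open>?d \<noteq> 0\<close>] by blast
    show "of_nat (fact (degree P)) \<noteq> (0::'a)" using fact P(2) by simp
    show "(\<Sum>i<n. prior_occurrences ?b i) + (\<Sum>i<n. i) + degree P = n * (card A - 1)"
      using deg P(2) by simp
  qed
  with P(3) linear_form_Suc_in_restricted_sums show False by blast
qed

end
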